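(* Assume (A1)–(A3). If $m_1<0$, then for every $\theta>0$ there exist $C>0$ and $\delta>0$ such that for all $(i,j)\in\mathbb N\times\mathbb Z$, $k\in\mathbb N$ and $n\in\mathbb N$, \[\mathbb P_{(i,j)}(T_1^k\ge n)\le C\exp(\theta i-\delta n),\] where $T_1^k=\inf\{n>0: X_1(n)\le\max(k_0-1,k)\}$.
   Context: Let $\mathbb N=\{0,1,2,\dots\}$ and fix an integer $k_0\ge1$. Let $\mu$, $\mu'_j$ ($0\le j<k_0$), $\mu''_i$ ($0\le i<k_0$), $\mu_{ij}$ ($0\le i,j<k_0$) be probability measures on $\mathbb Z^2$. The random walk $Z=(X(n),Y(n))$ on $\mathbb N^2$ has transition probabilities $p((i,j)\to(i',j'))$ equal to $\mu(i'-i,j'-j)$ if $i,j\ge k_0$; $\mu'_j(i'-i,j'-j)$ if $i\ge k_0$, $0\le j<k_0$; $\mu''_i(i'-i,j'-j)$ if $0\le i<k_0$, $j\ge k_0$; $\mu_{ij}(i'-i,j'-j)$ if $0\le i,j<k_0$. Assumptions: (A1) $\mu(a,b)=0$ if $a<-k_0$ or $b<-k_0$; $\mu'_j(a,b)=0$ if $a<-k_0$ or $b<-j$; $\mu''_i(a,b)=0$ if $b<-k_0$ or $a<-i$; $\mu_{ij}(a,b)=0$ if $a<-i$ or $b<-j$. (A2) There are $\delta,\gamma,C>0$ with $\sup_{(i,j)\in\mathbb N^2}\mathbb E_{(i,j)}[\exp(\delta(X(1)-i)+\gamma(Y(1)-j))]\le C$. (A3) $Z_0,Z_1,Z_2,Z$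 are irreducible on their state spaces. $Z_0$: random walk on $\mathbb Z^2$ with increment law $\mu$; $m_1=\sum a\mu(a,b)$. $Z_1=(X_1,Y_1)$: Markov chain on $\mathbb N\times\mathbb Z$ with transitions $\mu(i'-i,j'-j)$ from $(i,j)$ if $i\ge k_0$ and $\mu''_i(i'-i,j'-j)$ if $0\le i<k_0$; $\mathbb P_{(i,j)}$ is its law from $(i,j)$. $Z_2$: Markov chain on $\mathbb Z\times\mathbb N$ with transitions $\mu$ if $j\ge k_0$ and $\mu'_j$ if $0\le j<k_0$. *)

theory Defs
  imports "HOL-Probability.Probability"
begin

type_synonym state = "int \<times> int"

definition shift_pmf :: "state \<Rightarrow> (int \<times> int) pmf \<Rightarrow> state pmf" where
  "shift_pmf x p = map_pmf (\<lambda>(a, b). (fst x + a, snd x + b)) p"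

definition stepZ :: "nat \<Rightarrow> (int \<times> int) pmf \<Rightarrow> (nat \<Rightarrow> (int \<times> int) pmf) \<Rightarrow>
    (nat \<Rightarrow> (int \<times> int) pmf) \<Rightarrow> (nat \<Rightarrow> nat \<Rightarrow> (int \<times> int) pmf) \<Rightarrow> state \<Rightarrow> state pmf" where
  "stepZ k0 mu mu' mu'' mu2 x = shift_pmf x
     (if int k0 \<le> fst x \<and> int k0 \<le> snd x then mu
      else if int k0 \<le> fst x then mu' (nat (snd x))
      else if int k0 \<le> snd x then mu'' (nat (fst x))
      else mu2 (nat (fst x)) (nat (snd x)))"

definition stepZ0 :: "(int \<times> int) pmf \<Rightarrow> state \<Rightarrow> state pmf" where
  "stepZ0 mu x = shift_pmf x mu"

definition stepZ1 :: "nat \<Rightarrow> (int \<times> int) pmf \<Rightarrow> (nat \<Rightarrow> (int \<times> int) pmf) \<Rightarrow> state \<Rightarrow> state pmf" where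
  "stepZ1 k0 mu mu'' x = shift_pmf x (if int k0 \<le> fst x then mu else mu'' (nat (fst x)))"

definition stepZ2 :: "nat \<Rightarrow> (int \<times> int) pmf \<Rightarrow> (nat \<Rightarrow> (int \<times> int) pmf) \<Rightarrow> state \<Rightarrow> state pmf" where
  "stepZ2 k0 mu mu' x = shift_pmf x (if int k0 \<le> snd x then mu else mu' (nat (snd x)))"

definition irreducible_on :: "'s set \<Rightarrow> ('s \<Rightarrow> 's pmf) \<Rightarrow> bool" where
  "irreducible_on S P \<longleftrightarrow>
     (\<forall>x\<in>S. \<forall>y\<in>S. (x, y) \<in> {(u, v). u \<in> S \<and> v \<in> set_pmf (P u)}\<^sup>*)"

text \<open>Law of the path (Z(1), ..., Z(n)) of the Markov chain with kernel P started at x.\<close>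
primrec path_pmf :: "('s \<Rightarrow> 's pmf) \<Rightarrow> nat \<Rightarrow> 's \<Rightarrow> 's list pmf" where
  "path_pmf P 0 x = return_pmf []"
| "path_pmf P (Suc n) x = bind_pmf (P x) (\<lambda>y. map_pmf (Cons y) (path_pmf P n y))"

text \<open>P_x(T \<ge> n) where T = inf {m > 0. Z(m) \<in> A} (inf of empty set = infinity):
  the event T \<ge> n means Z(m) \<notin> A for all 0 < m < n; ys ! (m - 1) = Z(m).\<close>
definition hit_ge_prob :: "('s \<Rightarrow> 's pmf) \<Rightarrow> 's \<Rightarrow> 's set \<Rightarrow> nat \<Rightarrow> real" where
  "hit_ge_prob P x A n =
     measure_pmf.prob (path_pmf P n x) {ys. \<forall>m. 0 < m \<and> m < n \<longrightarrow> ys ! (m - 1) \<notin> A}"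

definition drift1 :: "(int \<times> int) pmf \<Rightarrow> real" where
  "drift1 mu = measure_pmf.expectation mu (\<lambda>(a, b). real_of_int a)"

end

theory Submission
  imports Defs
begin

(* Away from the wall {x < k0}, the horizontal coordinate of Z_1 is a random walk with increment
   law mu, which has negative mean m_1 and, by (A1) and (A2), a finite exponential moment of some
   order d > 0. Hence the horizontal Laplace transform rho = E_mu exp(t a) is below 1 for some
   small t in (0, min theta d], and V(z) = exp(t X(z)) satisfies E_y V(Z_1(1)) <= rho V(y) off
   A = {x <= max(k0 - 1, k)}, where also V >= 1. Iterating this along paths that avoid A gives
   P_(i,j)(T >= n + 2) <= rho^n E_(i,j) V(Z_1(1)), and (A2) bounds the last expectation by
   M exp(t i) <= M exp(theta i) uniformly in j. *)

lemma abs_exp_minus_one_le: "\<bar>exp u - 1\<bar> \<le> \<bar>u\<bar> * exp (max u 0)" for u :: real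
proof (cases "0 \<le> u")
  case True
  have "1 - u \<le> exp (- u)" using exp_ge_add_one_self[of "- u"] by simp
  then have "(1 - u) * exp u \<le> 1" by (simp add: mult.commute exp_minus field_simps)
  then show ?thesis using True by (simp add: algebra_simps)
next
  case False
  have "u \<le> exp u - 1" using exp_ge_add_one_self[of u] by linarith
  moreover have "exp u \<le> 1" using False by simp
  ultimately show ?thesis using False by (simp add: max_def)
qed

lemma abs_exp_diff_quotient_le:
  fixes t d y :: real
  assumes t: "0 < t" "t \<le> d / 2"
  shows "\<bar>(exp (t * y) - 1) / t\<bar> \<le> \<bar>y\<bar> + 2 / d * exp (d * y)"
proof -
  have d: "0 < d" using t by linarith
  have "\<bar>(exp (t * y) - 1) / t\<bar> \<le> \<bar>t * y\<bar> * exp (max (t * y) 0) / t"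
    using t abs_exp_minus_one_le[of "t * y"] by (simp add: abs_div divide_right_mono)
  also have "\<dots> = \<bar>y\<bar> * exp (max (t * y) 0)"
    using t by (simp add: abs_mult)
  also have "\<dots> \<le> \<bar>y\<bar> + 2 / d * exp (d * y)"
  proof (cases "y \<le> 0")
    case True
    then show ?thesis using d t by (simp add: max_def mult_nonneg_nonpos)
  next
    case False
    have "exp (t * y) \<le> exp (d / 2 * y)"
      using False t by (simp add: mult_right_mono)
    moreover have "d / 2 * y \<le> exp (d / 2 * y)"
      using exp_ge_add_one_self[of "d / 2 * y"] by linarith
    ultimately have "y * exp (t * y) \<le> 2 / d * exp (d / 2 * y) * exp (d / 2 * y)"
      using False d by (intro mult_mono) (auto simp: field_simps)
    also have "\<dots> = 2 / d * exp (d * y)" by (simp flip: exp_add)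
    finally show ?thesis using False d t by (simp add: max_def)
  qed
  finally show ?thesis .
qed

lemma exp_diff_quotient_tendsto:
  fixes y :: real
  assumes "filterlim \<tau> (at 0) F"
  shows "((\<lambda>n. (exp (\<tau> n * y) - 1) / \<tau> n) \<longlongrightarrow> y) F"
proof -
  have "((\<lambda>h. (exp ((0 + h) * y) - exp (0 * y)) / h) \<longlongrightarrow> y) (at 0)"
    by (rule DERIV_D) (auto intro!: derivative_eq_intros)
  from filterlim_compose[OF this assms] show ?thesis by simp
qed

(* (E exp(tX) - 1) / t tends to E X as t decreases to 0, by dominated convergence. *)
lemma (in prob_space) exists_exp_moment_less_one:
  fixes X :: "'a \<Rightarrow> real"
  assumes int_X: "integrable M X" and drift: "expectation X < 0"
    and d: "0 < d" and int_exp: "integrable M (\<lambda>x. exp (d * X x))" and \<theta>: "0 < \<theta>"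
  shows "\<exists>t>0. t \<le> \<theta> \<and> t \<le> d \<and> integrable M (\<lambda>x. exp (t * X x)) \<and>
           expectation (\<lambda>x. exp (t * X x)) < 1"
proof -
  define c where "c = min \<theta> (d / 2)"
  define \<tau> where "\<tau> n = c / Suc n" for n :: nat
  have "0 < c" using \<theta> d by (simp add: c_def)
  moreover have "\<tau> n \<le> c" for n
    using \<open>0 < c\<close> by (simp add: \<tau>_def divide_le_eq algebra_simps)
  ultimately have \<tau>: "0 < \<tau> n" "\<tau> n \<le> \<theta>" "\<tau> n \<le> d / 2" for n
    by (auto simp: \<tau>_def c_def intro: order_trans)
  have "\<tau> \<longlonglongrightarrow> 0"
    unfolding \<tau>_def by (rule LIMSEQ_Suc[OF lim_const_over_n])
  then have \<tau>_at_0: "filterlim \<tau> (at 0) sequentially"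
    using \<tau>(1) by (auto simp: filterlim_at intro!: always_eventually less_imp_neq[symmetric])
  define s where "s n x = (exp (\<tau> n * X x) - 1) / \<tau> n" for n x
  define w where "w x = \<bar>X x\<bar> + 2 / d * exp (d * X x)" for x
  have lim_s: "(\<lambda>n. s n x) \<longlonglongrightarrow> X x" for x
    unfolding s_def using \<tau>_at_0 by (rule exp_diff_quotient_tendsto)
  have bound: "norm (s n x) \<le> w x" for n x
    unfolding s_def w_def real_norm_def using \<tau>(1,3) by (rule abs_exp_diff_quotient_le)
  have [measurable]: "X \<in> borel_measurable M" using int_X by auto
  have [measurable]: "s n \<in> borel_measurable M" for n unfolding s_def by measurable
  have int_w: "integrable M w" unfolding w_def using int_X int_exp by simp
  have int_s: "integrable M (s n)" for n
    by (rule integrable_dominated_convergence2[where w=w and f=X]) (use int_w lim_s bound in auto)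
  have "(\<lambda>n. expectation (s n)) \<longlonglongrightarrow> expectation X"
    by (rule integral_dominated_convergence[where w=w]) (use int_w lim_s bound in auto)
  then obtain n where "expectation (s n) < 0"
    using drift by (metis order_tendstoD(2) eventually_sequentially order_refl)
  have exp_eq: "exp (\<tau> n * X x) = \<tau> n * s n x + 1" for x
    using \<tau>(1)[of n] by (simp add: s_def)
  have int_exp_\<tau>: "integrable M (\<lambda>x. exp (\<tau> n * X x))"
    unfolding exp_eq using int_s by simp
  have "expectation (\<lambda>x. exp (\<tau> n * X x)) = \<tau> n * expectation (s n) + 1"
    unfolding exp_eq using int_s by (simp add: prob_space)
  also have "\<dots> < 1" using \<tau>(1)[of n] \<open>expectation (s n) < 0\<close> by (simp add: mult_pos_neg)
  finally show ?thesis using \<tau>[of n] d int_exp_\<tau> by (intro exI[of _ "\<tau> n"]) auto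
qed

(* For a path ys = [Z(1), ..., Z(n)], the event T >= n says that ys ! 0, ..., ys ! (n - 2) avoid A. *)
definition avoiding_paths :: "'s set \<Rightarrow> nat \<Rightarrow> 's list set" where
  "avoiding_paths A n = {ys. \<forall>m < n - 1. ys ! m \<notin> A}"

lemma hit_ge_prob_eq_measure_avoiding_paths:
  "hit_ge_prob P x A n = measure (path_pmf P n x) (avoiding_paths A n)"
proof -
  have "{ys. \<forall>m. 0 < m \<and> m < n \<longrightarrow> ys ! (m - 1) \<notin> A} = avoiding_paths A n"
    unfolding avoiding_paths_def by (auto simp: less_diff_conv)
  then show ?thesis by (simp add: hit_ge_prob_def)
qed

lemma Cons_mem_avoiding_paths_Suc_Suc:
  "y # zs \<in> avoiding_paths A (Suc (Suc n)) \<longleftrightarrow> y \<notin> A \<and> zs \<in> avoiding_paths A (Suc n)"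
  by (auto simp: avoiding_paths_def less_Suc_eq_0_disj)

lemma emeasure_path_pmf_avoiding_paths_Suc_Suc:
  fixes P :: "'s \<Rightarrow> 's pmf"
  shows "emeasure (path_pmf P (Suc (Suc n)) x) (avoiding_paths A (Suc (Suc n))) =
     (\<integral>\<^sup>+ y. indicator (- A) y * emeasure (path_pmf P (Suc n) y) (avoiding_paths A (Suc n)) \<partial>P x)"
proof -
  have "Cons y -` avoiding_paths A (Suc (Suc n)) = (if y \<in> A then {} else avoiding_paths A (Suc n))" for y
    by (auto simp: Cons_mem_avoiding_paths_Suc_Suc)
  then show ?thesis
    by (simp only: path_pmf.simps(2)[of P "Suc n"] emeasure_bind_pmf emeasure_map_pmf)
       (intro nn_integral_cong, simp del: path_pmf.simps split: split_indicator)
qed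

lemma emeasure_avoiding_paths_le_Lyapunov:
  fixes P :: "'s \<Rightarrow> 's pmf" and V :: "'s \<Rightarrow> ennreal"
  assumes V_ge_1: "\<And>y. y \<notin> A \<Longrightarrow> 1 \<le> V y"
    and V_drift: "\<And>y. y \<notin> A \<Longrightarrow> (\<integral>\<^sup>+ z. V z \<partial>P y) \<le> \<rho> * V y"
  shows "emeasure (path_pmf P (Suc (Suc n)) x) (avoiding_paths A (Suc (Suc n)))
           \<le> \<rho> ^ n * (\<integral>\<^sup>+ y. V y \<partial>P x)"
proof (induction n arbitrary: x)
  case 0
  have "emeasure (path_pmf P (Suc (Suc 0)) x) (avoiding_paths A (Suc (Suc 0)))
      \<le> (\<integral>\<^sup>+ y. indicator (- A) y \<partial>P x)"
    unfolding emeasure_path_pmf_avoiding_paths_Suc_Suc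
    by (intro nn_integral_mono) (simp add: mult_left_le measure_pmf.emeasure_le_1 del: path_pmf.simps)
  also have "\<dots> \<le> (\<integral>\<^sup>+ y. V y \<partial>P x)"
    by (intro nn_integral_mono) (auto simp: V_ge_1 split: split_indicator)
  finally show ?case by simp
next
  case (Suc n)
  have "emeasure (path_pmf P (Suc (Suc (Suc n))) x) (avoiding_paths A (Suc (Suc (Suc n))))
      \<le> (\<integral>\<^sup>+ y. indicator (- A) y * (\<rho> ^ n * (\<integral>\<^sup>+ z. V z \<partial>P y)) \<partial>P x)"
    unfolding emeasure_path_pmf_avoiding_paths_Suc_Suc[of P "Suc n"]
    by (intro nn_integral_mono mult_left_mono Suc.IH) simp
  also have "\<dots> \<le> (\<integral>\<^sup>+ y. \<rho> ^ Suc n * V y \<partial>P x)"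
  proof (intro nn_integral_mono)
    fix y
    show "indicator (- A) y * (\<rho> ^ n * (\<integral>\<^sup>+ z. V z \<partial>P y)) \<le> \<rho> ^ Suc n * V y"
      using mult_left_mono[OF V_drift, of y "\<rho> ^ n"] by (simp add: mult_ac split: split_indicator)
  qed
  also have "\<dots> = \<rho> ^ Suc n * (\<integral>\<^sup>+ y. V y \<partial>P x)"
    by (rule nn_integral_cmult) simp
  finally show ?case .
qed

lemma hit_ge_prob_le_exp_decay:
  fixes P :: "'s \<Rightarrow> 's pmf" and V :: "'s \<Rightarrow> real"
  assumes V_ge_1: "\<And>y. y \<notin> A \<Longrightarrow> 1 \<le> V y"
    and V_drift: "\<And>y. y \<notin> A \<Longrightarrow> (\<integral>\<^sup>+ z. ennreal (V z) \<partial>P y) \<le> ennreal (\<rho> * V y)"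
    and \<rho>: "0 \<le> \<rho>" "\<rho> \<le> exp (- \<delta>)" and \<delta>: "0 \<le> \<delta>"
    and start: "(\<integral>\<^sup>+ y. ennreal (V y) \<partial>P x) \<le> ennreal K" and K: "1 \<le> K"
  shows "hit_ge_prob P x A n \<le> exp (2 * \<delta>) * K * exp (- \<delta> * n)"
proof (cases "n < 2")
  case True
  have "hit_ge_prob P x A n \<le> 1"
    by (simp add: hit_ge_prob_def)
  also have "1 \<le> exp (2 * \<delta> - \<delta> * n)"
    using True \<delta> mult_left_mono[of "real n" 2 \<delta>] by simp
  also have "\<dots> = exp (2 * \<delta>) * 1 * exp (- \<delta> * n)"
    by (simp flip: exp_add)
  also have "\<dots> \<le> exp (2 * \<delta>) * K * exp (- \<delta> * n)"
    using K by (intro mult_right_mono mult_left_mono) auto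
  finally show ?thesis .
next
  case False
  then obtain m where n: "n = Suc (Suc m)"
    by (metis add_2_eq_Suc le_add_diff_inverse not_less)
  have "emeasure (path_pmf P n x) (avoiding_paths A n) \<le> ennreal \<rho> ^ m * ennreal K"
    unfolding n
  proof (rule order_trans[OF emeasure_avoiding_paths_le_Lyapunov])
    show "(\<integral>\<^sup>+ z. ennreal (V z) \<partial>P y) \<le> ennreal \<rho> * ennreal (V y)" if "y \<notin> A" for y
      using V_drift[OF that] \<rho>(1) V_ge_1[OF that] by (simp add: ennreal_mult)
  qed (use V_ge_1 start in \<open>auto intro: mult_left_mono\<close>)
  then have "hit_ge_prob P x A n \<le> \<rho> ^ m * K"
    using \<rho>(1) K by (simp add: hit_ge_prob_eq_measure_avoiding_paths measure_pmf.emeasure_eq_measure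
        ennreal_power ennreal_mult[symmetric])
  also have "\<dots> \<le> exp (- \<delta>) ^ m * K"
    using \<rho> K by (intro mult_right_mono power_mono) auto
  also have "\<dots> = exp (2 * \<delta>) * K * exp (- \<delta> * n)"
    by (simp add: n exp_of_nat_mult[symmetric] algebra_simps flip: exp_add)
  finally show ?thesis .
qed

lemma nn_integral_exp_le_one_plus:
  fixes p :: "'a pmf" and f :: "'a \<Rightarrow> real"
  assumes "0 \<le> t" "t \<le> d"
  shows "(\<integral>\<^sup>+ x. ennreal (exp (t * f x)) \<partial>p) \<le> 1 + (\<integral>\<^sup>+ x. ennreal (exp (d * f x)) \<partial>p)"
proof -
  have "exp (t * f x) \<le> 1 + exp (d * f x)" for x
  proof (cases "0 \<le> f x")
    case True
    then have "exp (t * f x) \<le> exp (d * f x)" using assms by (simp add: mult_right_mono)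
    then show ?thesis by (simp add: add_increasing)
  next
    case False
    then have "exp (t * f x) \<le> 1" using assms by (simp add: mult_nonneg_nonpos)
    then show ?thesis by (simp add: add_increasing2)
  qed
  then have "(\<integral>\<^sup>+ x. ennreal (exp (t * f x)) \<partial>p) \<le> (\<integral>\<^sup>+ x. ennreal (1 + exp (d * f x)) \<partial>p)"
    by (intro nn_integral_mono ennreal_leI)
  also have "\<dots> = 1 + (\<integral>\<^sup>+ x. ennreal (exp (d * f x)) \<partial>p)"
    by (simp add: ennreal_plus nn_integral_add measure_pmf.emeasure_space_1)
  finally show ?thesis .
qed

lemma nn_integral_shift_pmf:
  "(\<integral>\<^sup>+ z. f z \<partial>shift_pmf x p) = (\<integral>\<^sup>+ z. f (fst x + fst z, snd x + snd z) \<partial>p)"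
  unfolding shift_pmf_def nn_integral_map_pmf by (simp add: case_prod_unfold)

lemma nn_integral_exp_fst_shift_pmf:
  "(\<integral>\<^sup>+ z. ennreal (exp (t * real_of_int (fst z))) \<partial>shift_pmf x p) =
     ennreal (exp (t * real_of_int (fst x))) * (\<integral>\<^sup>+ z. ennreal (exp (t * real_of_int (fst z))) \<partial>p)"
  unfolding nn_integral_shift_pmf
  by (simp add: distrib_left exp_add ennreal_mult nn_integral_cmult)

lemma nn_integral_exp_fst_le_of_joint:
  fixes q :: "(int \<times> int) pmf" and c :: int
  assumes snd_ge: "\<forall>z\<in>set_pmf q. - c \<le> snd z" and \<gamma>: "0 \<le> \<gamma>"
    and joint: "(\<integral>\<^sup>+ z. ennreal (exp (d * real_of_int (fst z) + \<gamma> * real_of_int (snd z))) \<partial>q) \<le> ennreal C"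
  shows "(\<integral>\<^sup>+ z. ennreal (exp (d * real_of_int (fst z))) \<partial>q) \<le> ennreal (C * exp (\<gamma> * real_of_int c))"
proof -
  have "(\<integral>\<^sup>+ z. ennreal (exp (d * real_of_int (fst z))) \<partial>q)
      \<le> (\<integral>\<^sup>+ z. ennreal (exp (d * real_of_int (fst z) + \<gamma> * real_of_int (snd z)))
             * ennreal (exp (\<gamma> * real_of_int c)) \<partial>q)"
  proof (intro nn_integral_mono_AE, unfold AE_measure_pmf_iff, intro ballI)
    fix z :: "int \<times> int" assume "z \<in> set_pmf q"
    then have "0 \<le> snd z + c"
      using snd_ge by fastforce
    then have "0 \<le> \<gamma> * real_of_int (snd z + c)"
      using \<gamma> by simp
    then show "ennreal (exp (d * real_of_int (fst z)))
        \<le> ennreal (exp (d * real_of_int (fst z) + \<gamma> * real_of_int (snd z))) * ennreal (exp (\<gamma> * real_of_int c))"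
      by (simp add: ennreal_mult[symmetric] distrib_left flip: exp_add)
  qed
  also have "\<dots> = (\<integral>\<^sup>+ z. ennreal (exp (d * real_of_int (fst z) + \<gamma> * real_of_int (snd z))) \<partial>q)
      * ennreal (exp (\<gamma> * real_of_int c))"
    by (rule nn_integral_multc) simp
  also have "\<dots> \<le> ennreal (C * exp (\<gamma> * real_of_int c))"
    using joint by (simp add: ennreal_mult'' mult_right_mono)
  finally show ?thesis .
qed

(* From (i, j), Z_1 makes the same jump as Z from (i, k0); by (A1) that jump keeps the second
   coordinate nonnegative, so the factor exp(gamma (snd z - k0)) in (A2) is at least exp(- gamma k0). *)
lemma stepZ1_exp_moment_le:
  fixes i j :: int and d \<gamma> t C :: real
  assumes mu_snd: "\<forall>(a, b)\<in>set_pmf mu. - int k0 \<le> b"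
    and mu''_snd: "\<forall>i<k0. \<forall>(a, b)\<in>set_pmf (mu'' i). - int k0 \<le> b"
    and joint: "(\<integral>\<^sup>+ z. ennreal (exp (d * real_of_int (fst z - i) + \<gamma> * real_of_int (snd z - int k0)))
                  \<partial>stepZ k0 mu mu' mu'' mu2 (i, int k0)) \<le> ennreal C"
    and i: "0 \<le> i" and \<gamma>: "0 \<le> \<gamma>" and C: "0 \<le> C" and t: "0 \<le> t" "t \<le> d"
  shows "(\<integral>\<^sup>+ z. ennreal (exp (t * real_of_int (fst z))) \<partial>stepZ1 k0 mu mu'' (i, j))
           \<le> ennreal (exp (t * real_of_int i) * (1 + C * exp (\<gamma> * real k0)))"
proof -
  define q where "q = (if int k0 \<le> i then mu else mu'' (nat i))"
  have "nat i < k0" if "\<not> int k0 \<le> i"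
    using that i by linarith
  then have "\<forall>z\<in>set_pmf q. - int k0 \<le> snd z"
    using mu_snd mu''_snd by (auto simp: q_def split_beta)
  moreover have "stepZ k0 mu mu' mu'' mu2 (i, int k0) = shift_pmf (i, int k0) q"
    by (simp add: stepZ_def q_def)
  ultimately have "(\<integral>\<^sup>+ z. ennreal (exp (d * real_of_int (fst z))) \<partial>q)
      \<le> ennreal (C * exp (\<gamma> * real_of_int (int k0)))"
    using joint \<gamma> by (intro nn_integral_exp_fst_le_of_joint) (simp_all add: nn_integral_shift_pmf)
  then have "(\<integral>\<^sup>+ z. ennreal (exp (t * real_of_int (fst z))) \<partial>q) \<le> 1 + ennreal (C * exp (\<gamma> * real k0))"
    using nn_integral_exp_le_one_plus[OF t, of q "\<lambda>z. real_of_int (fst z)"] by (simp add: order_trans)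
  then have "ennreal (exp (t * real_of_int i)) * (\<integral>\<^sup>+ z. ennreal (exp (t * real_of_int (fst z))) \<partial>q)
      \<le> ennreal (exp (t * real_of_int i)) * (1 + ennreal (C * exp (\<gamma> * real k0)))"
    by (rule mult_left_mono) simp
  moreover have "stepZ1 k0 mu mu'' (i, j) = shift_pmf (i, j) q"
    by (simp add: stepZ1_def q_def)
  ultimately show ?thesis
    using C by (simp add: nn_integral_exp_fst_shift_pmf ennreal_mult ennreal_plus)
qed

lemma exp_moment_less_one_of_drift1:
  fixes mu :: "(int \<times> int) pmf"
  assumes drift: "drift1 mu < 0" and d: "0 < d" and \<theta>: "0 < \<theta>"
    and finite: "(\<integral>\<^sup>+ z. ennreal (exp (d * real_of_int (fst z))) \<partial>mu) < \<infinity>"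
  shows "\<exists>t>0. t \<le> \<theta> \<and> t \<le> d \<and>
           (\<exists>\<rho>. 0 \<le> \<rho> \<and> \<rho> < 1 \<and> (\<integral>\<^sup>+ z. ennreal (exp (t * real_of_int (fst z))) \<partial>mu) = ennreal \<rho>)"
proof -
  have neg: "measure_pmf.expectation mu (\<lambda>z. real_of_int (fst z)) < 0"
    using drift by (simp add: drift1_def case_prod_unfold)
  then have "integrable mu (\<lambda>z. real_of_int (fst z))"
    using not_integrable_integral_eq by force
  moreover have "integrable mu (\<lambda>z. exp (d * real_of_int (fst z)))"
    using finite by (intro integrableI_bounded) auto
  ultimately obtain t where t: "0 < t" "t \<le> \<theta>" "t \<le> d"
    and int_t: "integrable mu (\<lambda>z. exp (t * real_of_int (fst z)))"
    and less: "measure_pmf.expectation mu (\<lambda>z. exp (t * real_of_int (fst z))) < 1"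
    using measure_pmf.exists_exp_moment_less_one[OF _ neg d _ \<theta>] by blast
  have "(\<integral>\<^sup>+ z. ennreal (exp (t * real_of_int (fst z))) \<partial>mu)
      = ennreal (measure_pmf.expectation mu (\<lambda>z. exp (t * real_of_int (fst z))))"
    using int_t by (intro nn_integral_eq_integral) auto
  then show ?thesis
    using t less by (intro exI[of _ t] conjI exI) auto
qed

lemma nn_integral_exp_fst_stepZ1:
  fixes mu :: "(int \<times> int) pmf"
  assumes "int k0 \<le> fst y"
  shows "(\<integral>\<^sup>+ z. ennreal (exp (t * real_of_int (fst z))) \<partial>stepZ1 k0 mu mu'' y) =
           ennreal (exp (t * real_of_int (fst y))) * (\<integral>\<^sup>+ z. ennreal (exp (t * real_of_int (fst z))) \<partial>mu)"
  using assms by (simp add: stepZ1_def nn_integral_exp_fst_shift_pmf)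

lemma stepZ1_hit_ge_prob_exp_bound:
  fixes mu :: "(int \<times> int) pmf"
  assumes k0: "1 \<le> k0" and t: "0 < t" "t \<le> \<theta>" and \<rho>: "0 \<le> \<rho>" "\<rho> < 1" and M: "1 \<le> M"
    and laplace: "(\<integral>\<^sup>+ z. ennreal (exp (t * real_of_int (fst z))) \<partial>mu) \<le> ennreal \<rho>"
    and moment: "\<And>i j. 0 \<le> i \<Longrightarrow>
      (\<integral>\<^sup>+ z. ennreal (exp (t * real_of_int (fst z))) \<partial>stepZ1 k0 mu mu'' (i, j))
        \<le> ennreal (exp (t * real_of_int i) * M)"
  shows "\<exists>C>0. \<exists>\<delta>>0. \<forall>(i::int) (j::int) (k::nat) (n::nat). 0 \<le> i \<longrightarrow>
           hit_ge_prob (stepZ1 k0 mu mu'') (i, j) {x. fst x \<le> int (max (k0 - 1) k)} n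
             \<le> C * exp (\<theta> * real_of_int i - \<delta> * real n)"
proof -
  define \<delta> where "\<delta> = - ln ((1 + \<rho>) / 2)"
  have \<delta>: "0 < \<delta>" "\<rho> \<le> exp (- \<delta>)"
    using \<rho> by (auto simp: \<delta>_def)
  have "hit_ge_prob (stepZ1 k0 mu mu'') (i, j) {x. fst x \<le> int (max (k0 - 1) k)} n
      \<le> exp (2 * \<delta>) * M * exp (\<theta> * real_of_int i - \<delta> * real n)" if i: "0 \<le> i" for i j k n
  proof -
    let ?A = "{x. fst x \<le> int (max (k0 - 1) k)}"
    have "hit_ge_prob (stepZ1 k0 mu mu'') (i, j) ?A n
        \<le> exp (2 * \<delta>) * (exp (\<theta> * real_of_int i) * M) * exp (- \<delta> * real n)"
    proof (rule hit_ge_prob_le_exp_decay[where V = "\<lambda>z. exp (t * real_of_int (fst z))"])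
      show "1 \<le> exp (t * real_of_int (fst y))" if "y \<notin> ?A" for y
        using that t by auto
      show "(\<integral>\<^sup>+ z. ennreal (exp (t * real_of_int (fst z))) \<partial>stepZ1 k0 mu mu'' y)
          \<le> ennreal (\<rho> * exp (t * real_of_int (fst y)))" if "y \<notin> ?A" for y
      proof -
        have "int k0 \<le> fst y"
          using that k0 by (simp add: max_def of_nat_diff split: if_splits)
        then have "(\<integral>\<^sup>+ z. ennreal (exp (t * real_of_int (fst z))) \<partial>stepZ1 k0 mu mu'' y)
            \<le> ennreal (exp (t * real_of_int (fst y))) * ennreal \<rho>"
          using laplace by (simp add: nn_integral_exp_fst_stepZ1 mult_left_mono)
        then show ?thesis
          using \<rho> by (simp add: ennreal_mult mult.commute)
      qed
      have "exp (t * real_of_int i) * M \<le> exp (\<theta> * real_of_int i) * M"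
        using t i M by (intro mult_right_mono) (auto simp: mult_right_mono)
      then show "(\<integral>\<^sup>+ z. ennreal (exp (t * real_of_int (fst z))) \<partial>stepZ1 k0 mu mu'' (i, j))
          \<le> ennreal (exp (\<theta> * real_of_int i) * M)"
        using moment[OF i] by (meson ennreal_leI order_trans)
      show "1 \<le> exp (\<theta> * real_of_int i) * M"
        using t i M mult_mono[of 1 "exp (\<theta> * real_of_int i)" 1 M] by simp
    qed (use \<rho> \<delta> in auto)
    then show ?thesis
      by (simp add: exp_diff exp_minus divide_inverse mult_ac)
  qed
  moreover have "0 < exp (2 * \<delta>) * M"
    using M by simp
  ultimately show ?thesis
    using \<delta>(1) by blast
qed

theorem lemma5p2:
  fixes k0 :: nat
    and mu :: "(int \<times> int) pmf"
    and mu' :: "nat \<Rightarrow> (int \<times> int) pmf"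
    and mu'' :: "nat \<Rightarrow> (int \<times> int) pmf"
    and mu2 :: "nat \<Rightarrow> nat \<Rightarrow> (int \<times> int) pmf"
  assumes k0: "1 \<le> k0"
    and A1_mu: "\<forall>(a, b)\<in>set_pmf mu. - int k0 \<le> a \<and> - int k0 \<le> b"
    and A1_mu': "\<forall>j<k0. \<forall>(a, b)\<in>set_pmf (mu' j). - int k0 \<le> a \<and> - int j \<le> b"
    and A1_mu'': "\<forall>i<k0. \<forall>(a, b)\<in>set_pmf (mu'' i). - int i \<le> a \<and> - int k0 \<le> b"
    and A1_mu2: "\<forall>i<k0. \<forall>j<k0. \<forall>(a, b)\<in>set_pmf (mu2 i j). - int i \<le> a \<and> - int j \<le> b"
    and A2: "\<exists>\<delta>>0. \<exists>\<gamma>>0. \<exists>C>0. \<forall>i j. 0 \<le> i \<longrightarrow> 0 \<le> j \<longrightarrow>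
              (\<integral>\<^sup>+ z. ennreal (exp (\<delta> * real_of_int (fst z - i) + \<gamma> * real_of_int (snd z - j)))
                 \<partial>measure_pmf (stepZ k0 mu mu' mu'' mu2 (i, j))) \<le> ennreal C"
    and A3_Z0: "irreducible_on UNIV (stepZ0 mu)"
    and A3_Z1: "irreducible_on {x. 0 \<le> fst x} (stepZ1 k0 mu mu'')"
    and A3_Z2: "irreducible_on {x. 0 \<le> snd x} (stepZ2 k0 mu mu')"
    and A3_Z: "irreducible_on {x. 0 \<le> fst x \<and> 0 \<le> snd x} (stepZ k0 mu mu' mu'' mu2)"
    and m1_neg: "drift1 mu < 0"
  shows "\<forall>\<theta>>0. \<exists>C>0. \<exists>\<delta>>0. \<forall>(i::int) (j::int) (k::nat) (n::nat). 0 \<le> i \<longrightarrow>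
           hit_ge_prob (stepZ1 k0 mu mu'') (i, j) {x. fst x \<le> int (max (k0 - 1) k)} n
             \<le> C * exp (\<theta> * real_of_int i - \<delta> * real n)"
proof (intro allI impI)
  fix \<theta> :: real assume \<theta>: "0 < \<theta>"
  obtain d \<gamma> C0 where d: "0 < d" and \<gamma>: "0 < \<gamma>" and C0: "0 < C0"
    and joint: "\<And>i j. 0 \<le> i \<Longrightarrow> 0 \<le> j \<Longrightarrow>
      (\<integral>\<^sup>+ z. ennreal (exp (d * real_of_int (fst z - i) + \<gamma> * real_of_int (snd z - j)))
         \<partial>stepZ k0 mu mu' mu'' mu2 (i, j)) \<le> ennreal C0"
    using A2 by blast
  define M where "M = 1 + C0 * exp (\<gamma> * real k0)"
  have moment: "(\<integral>\<^sup>+ z. ennreal (exp (t * real_of_int (fst z))) \<partial>stepZ1 k0 mu mu'' (i, j))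
      \<le> ennreal (exp (t * real_of_int i) * M)" if "0 \<le> i" "0 \<le> t" "t \<le> d" for i j t
    unfolding M_def
    by (rule stepZ1_exp_moment_le[OF _ _ joint[of i "int k0"]]) (use A1_mu A1_mu'' that \<gamma> C0 in fastforce)+
  have "ennreal (exp (d * k0)) * (\<integral>\<^sup>+ z. ennreal (exp (d * real_of_int (fst z))) \<partial>mu) < \<infinity>"
    using moment[of "int k0" d 0] d by (simp add: nn_integral_exp_fst_stepZ1 le_less_trans)
  then have "(\<integral>\<^sup>+ z. ennreal (exp (d * real_of_int (fst z))) \<partial>mu) < \<infinity>"
    by (auto simp: ennreal_mult_less_top)
  then obtain t \<rho> where t: "0 < t" "t \<le> \<theta>" "t \<le> d" and \<rho>: "0 \<le> \<rho>" "\<rho> < 1"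
    and laplace: "(\<integral>\<^sup>+ z. ennreal (exp (t * real_of_int (fst z))) \<partial>mu) = ennreal \<rho>"
    using exp_moment_less_one_of_drift1[OF m1_neg d \<theta>] by blast
  show "\<exists>C>0. \<exists>\<delta>>0. \<forall>(i::int) (j::int) (k::nat) (n::nat). 0 \<le> i \<longrightarrow>
           hit_ge_prob (stepZ1 k0 mu mu'') (i, j) {x. fst x \<le> int (max (k0 - 1) k)} n
             \<le> C * exp (\<theta> * real_of_int i - \<delta> * real n)"
    using stepZ1_hit_ge_prob_exp_bound[OF k0 t(1,2) \<rho> _ _ moment[OF _ less_imp_le[OF t(1)] t(3)]]
      laplace C0 by (simp add: M_def)
qed

end
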